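(* Let $\mathcal{A}$ be any algorithm in the $\mathsf{LOCAL}$ model that solves the distributed spanning tree reconfiguration problem in one step of $1$-simultaneous add and delete, i.e., for every connected graph $G=(V,E)$ and every pair of spanning trees $T_1, T_2$ of $G$ (given as input as described in the context), $\mathcal{A}$ outputs a valid single-step $1$-simultaneous add and delete reconfiguration schedule from $T_1$ to $T_2$. Then $\mathcal{A}$ requires $\Omega(n)$ rounds in the worst case, where $n$ is the number of nodes of the graph.
   Context: The $\mathsf{LOCAL}$ model: the communication network is an $n$-node graph $G$ whose nodes have unique identifiers; computation proceeds in synchronous rounds, in each of which every node may send a message of arbitrary size to each of its neighbours in $G$ and perform arbitrary local computation; the running time is the number of rounds. Distributed spanning tree reconfiguration problem: given a connected graph $G=(V,E)$ (which is the communication network) and two spanning trees $T_1,T_2$ of $G$, each node $v\in V$ initially knows only its own incident edges in $T_1$ and in $T_2$ (the trees are unrooted: no parent pointers are given). A $k$-simultaneous add and delete step applied to a spanning tree $T$ consists of each node $v$ choosing a set $A_v$ of at most $k$ edges incident to $v$ to add and a set $D_v$ of at most $k$ edges incident to $v$ (in $T$) to delete, such that no edge belongs to $A_u$ and $A_w$ for two different nodes $u\ne w$ and no edge belongs to $D_u$ and $D_w$ for two different nodes $u\neq w$; the result is $(T\setminus \bigcup_v D_v)\cup \bigcup_v A_v$. A valid single-step $k$-simultaneous add and delete reconfiguration schedule from $T_1$ to $T_2$ is one such step applied to $T_1$ whose result is exactly $T_2$; the algorithm must output it distributedly, i.e., each node $v$ outputs its own sets $A_v$ and $D_v$. *)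

theory Defs
  imports Main "HOL-Library.Landau_Symbols"
begin

text \<open>Nodes are natural numbers; a node's name is its unique identifier.
  An (undirected) edge is a two-element set of nodes.\<close>

definition adj :: "nat set set \<Rightarrow> nat \<Rightarrow> nat \<Rightarrow> bool" where
  "adj F u v \<longleftrightarrow> u \<noteq> v \<and> {u, v} \<in> F"

definition connected_on :: "nat set \<Rightarrow> nat set set \<Rightarrow> bool" where
  "connected_on V F \<longleftrightarrow> (\<forall>u\<in>V. \<forall>v\<in>V. (adj F)\<^sup>*\<^sup>* u v)"

definition is_graph :: "nat set \<Rightarrow> nat set set \<Rightarrow> bool" where
  "is_graph V E \<longleftrightarrow> finite V \<and> (\<forall>e\<in>E. e \<subseteq> V \<and> card e = 2)"

definition acyclic_edges :: "nat set set \<Rightarrow> bool" where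
  "acyclic_edges F \<longleftrightarrow> (\<forall>u v. {u, v} \<in> F \<and> u \<noteq> v \<longrightarrow> \<not> (adj (F - {{u, v}}))\<^sup>*\<^sup>* u v)"

definition spanning_tree :: "nat set \<Rightarrow> nat set set \<Rightarrow> nat set set \<Rightarrow> bool" where
  "spanning_tree V E T \<longleftrightarrow> T \<subseteq> E \<and> connected_on V T \<and> acyclic_edges T"

definition valid_instance :: "nat set \<Rightarrow> nat set set \<Rightarrow> nat set set \<Rightarrow> nat set set \<Rightarrow> bool" where
  "valid_instance V E T1 T2 \<longleftrightarrow> is_graph V E \<and> connected_on V E
     \<and> spanning_tree V E T1 \<and> spanning_tree V E T2"

definition incident :: "nat \<Rightarrow> nat set set \<Rightarrow> nat set set" where
  "incident v F = {e \<in> F. v \<in> e}"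

text \<open>A valid single-step k-simultaneous add and delete schedule: node v outputs
  out v = (A_v, D_v).\<close>
definition valid_schedule ::
  "nat \<Rightarrow> nat set \<Rightarrow> nat set set \<Rightarrow> nat set set \<Rightarrow> nat set set
     \<Rightarrow> (nat \<Rightarrow> nat set set \<times> nat set set) \<Rightarrow> bool" where
  "valid_schedule k V E T1 T2 out \<longleftrightarrow>
     (\<forall>v\<in>V. fst (out v) \<subseteq> incident v E \<and> card (fst (out v)) \<le> k
           \<and> snd (out v) \<subseteq> incident v T1 \<and> card (snd (out v)) \<le> k)
   \<and> (\<forall>u\<in>V. \<forall>w\<in>V. u \<noteq> w \<longrightarrow> fst (out u) \<inter> fst (out w) = {} \<and> snd (out u) \<inter> snd (out w) = {})
   \<and> (T1 - (\<Union>v\<in>V. snd (out v))) \<union> (\<Union>v\<in>V. fst (out v)) = T2"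

definition ball :: "nat set set \<Rightarrow> nat \<Rightarrow> nat \<Rightarrow> nat set" where
  "ball E r v = {u. \<exists>k\<le>r. (adj E ^^ k) v u}"

definition touching :: "nat set \<Rightarrow> nat set set \<Rightarrow> nat set set" where
  "touching B F = {e \<in> F. e \<inter> B \<noteq> {}}"

text \<open>It runs in r(n) rounds in the LOCAL model if, on n-node instances, the output of v
  depends only on what v can learn in r(n) rounds: the nodes (identifiers) within distance
  r(n) and all edges of G, T1, T2 incident to them (each node initially knows its incident
  edges). Knowledge of n is granted to the algorithm for free.\<close>
definition local_algorithm ::
  "(nat set \<Rightarrow> nat set set \<Rightarrow> nat set set \<Rightarrow> nat set set \<Rightarrow> nat \<Rightarrow> nat set set \<times> nat set set)
     \<Rightarrow> (nat \<Rightarrow> nat) \<Rightarrow> bool" where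
  "local_algorithm alg r \<longleftrightarrow>
     (\<forall>V E T1 T2 V' E' T1' T2' v.
        valid_instance V E T1 T2 \<and> valid_instance V' E' T1' T2'
        \<and> card V = card V' \<and> v \<in> V \<and> v \<in> V'
        \<and> ball E (r (card V)) v = ball E' (r (card V)) v
        \<and> touching (ball E (r (card V)) v) E = touching (ball E (r (card V)) v) E'
        \<and> touching (ball E (r (card V)) v) T1 = touching (ball E (r (card V)) v) T1'
        \<and> touching (ball E (r (card V)) v) T2 = touching (ball E (r (card V)) v) T2'
        \<longrightarrow> alg V E T1 T2 v = alg V' E' T1' T2' v)"

end

theory Submission
  imports Defs
begin

text \<open>Take the path \<open>p 0, p 1, \<dots>, p (n - 1)\<close> as \<open>T\<^sub>2\<close> and the folded path
  \<open>\<dots>, p 4, p 2, p 0, p 1, p 3, \<dots>\<close> as \<open>T\<^sub>1\<close>, inside the square of the path. Every edge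
  \<open>{p k, p (k + 1)}\<close> with \<open>k \<ge> 1\<close> is new, so it is added by one of its endpoints, and a node adds
  at most one edge; hence once such an edge is added by its right endpoint, so is every later one.
  Reversing a block of the labelling \<open>p\<close> is invisible to nodes deep inside the block but swaps
  left and right endpoints there. With two blocks of length about \<open>n / 4\<close> and radius below
  \<open>n / 8\<close>, the blocks can be oriented so that an early edge is added by its right endpoint and a
  later one by its left endpoint, a contradiction.\<close>

section \<open>Paths, balls and locality\<close>

lemma symp_adj: "symp (adj F)"
  by (auto simp: symp_def adj_def insert_commute)

lemma rtranclp_adj_sym: "(adj F)\<^sup>*\<^sup>* u v \<Longrightarrow> (adj F)\<^sup>*\<^sup>* v u"
  using sympD[OF symp_rtranclp[OF symp_adj]] .

lemma rtranclp_adj_mono: "(adj F)\<^sup>*\<^sup>* u v \<Longrightarrow> F \<subseteq> G \<Longrightarrow> (adj G)\<^sup>*\<^sup>* u v"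
  by (erule mono_rtranclp[rule_format, rotated]) (auto simp: adj_def)

lemma rtranclp_adj_closed_iff:
  assumes "\<And>x y. adj F x y \<Longrightarrow> x \<in> S \<longleftrightarrow> y \<in> S" and "(adj F)\<^sup>*\<^sup>* u v"
  shows "u \<in> S \<longleftrightarrow> v \<in> S"
  using assms(2)
proof induction
  case (step y z)
  then show ?case using assms(1) by blast
qed simp

lemma connected_onI:
  assumes "\<And>u. u \<in> V \<Longrightarrow> (adj F)\<^sup>*\<^sup>* w u"
  shows "connected_on V F"
  unfolding connected_on_def by (meson assms rtranclp_adj_sym rtranclp_trans)

lemma acyclic_edgesI:
  assumes "\<And>u v. {u, v} \<in> F \<Longrightarrow> u \<noteq> v \<Longrightarrow>
    \<exists>S. (u \<in> S \<longleftrightarrow> v \<notin> S) \<and> (\<forall>x y. adj (F - {{u, v}}) x y \<longrightarrow> x \<in> S \<longleftrightarrow> y \<in> S)"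
  shows "acyclic_edges F"
  unfolding acyclic_edges_def
proof (intro allI impI notI)
  fix u v assume "{u, v} \<in> F \<and> u \<noteq> v" and path: "(adj (F - {{u, v}}))\<^sup>*\<^sup>* u v"
  then obtain S where "u \<in> S \<longleftrightarrow> v \<notin> S" and "\<And>x y. adj (F - {{u, v}}) x y \<Longrightarrow> x \<in> S \<longleftrightarrow> y \<in> S"
    using assms[of u v] by blast
  then show False using rtranclp_adj_closed_iff[OF _ path] by blast
qed

lemma incident_eqI:
  assumes "\<forall>e \<in> F \<union> G. card e = 2" and "\<And>w. {u, w} \<in> F \<longleftrightarrow> {u, w} \<in> G"
  shows "incident u F = incident u G"
proof -
  have "e \<in> F \<longleftrightarrow> e \<in> G" if "u \<in> e" "e \<in> F \<union> G" for e
  proof -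
    obtain x y where "e = {x, y}" using assms(1) \<open>e \<in> F \<union> G\<close> by (meson card_2_iff)
    then obtain w where "e = {u, w}" using \<open>u \<in> e\<close> by (auto simp: insert_commute)
    then show ?thesis using assms(2) by simp
  qed
  then show ?thesis unfolding incident_def by auto
qed

lemma touching_eq_if_incident_eq:
  "(\<And>u. u \<in> B \<Longrightarrow> incident u F = incident u G) \<Longrightarrow> touching B F = touching B G"
  unfolding touching_def incident_def by blast

lemma ball_eq_if_adj_eq:
  assumes "ball E R v \<subseteq> S" and "\<And>w. w \<in> S \<Longrightarrow> adj E w = adj E' w"
  shows "ball E R v = ball E' R v"
proof -
  have "(adj E ^^ k) v u \<longleftrightarrow> (adj E' ^^ k) v u" if "k \<le> R" for k u
    using that
  proof (induction k arbitrary: u)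
    case (Suc k)
    have "adj E w = adj E' w" if "(adj E ^^ k) v w" for w
      using that Suc.prems assms unfolding ball_def by (auto intro: Suc_leD)
    then show ?case using Suc by (auto simp: relpowp_Suc_right)
  qed simp
  then show ?thesis unfolding ball_def by blast
qed

lemma ball_subset_window:
  assumes "\<And>w u. \<bar>int w - int v\<bar> \<le> int (d * R) \<Longrightarrow> adj E w u \<Longrightarrow> \<bar>int u - int w\<bar> \<le> int d"
  shows "ball E R v \<subseteq> {u. \<bar>int u - int v\<bar> \<le> int (d * R)}"
proof -
  have "\<bar>int u - int v\<bar> \<le> int (d * k)" if "k \<le> R" "(adj E ^^ k) v u" for k u
    using that
  proof (induction k arbitrary: u)
    case (Suc k)
    then obtain w where w: "(adj E ^^ k) v w" "adj E w u" by auto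
    then have wv: "\<bar>int w - int v\<bar> \<le> int (d * k)" using Suc by simp
    also have "\<dots> \<le> int (d * R)" using Suc.prems by (simp only: of_nat_le_iff mult_le_mono2 Suc_leD)
    finally have "\<bar>int u - int w\<bar> \<le> int d" using assms w(2) by blast
    with wv show ?case by simp
  qed simp
  note bound = this
  show ?thesis
  proof
    fix u assume "u \<in> ball E R v"
    then obtain k where k: "k \<le> R" "(adj E ^^ k) v u" unfolding ball_def by blast
    then have "d * k \<le> d * R" by simp
    with bound[OF k] show "u \<in> {u. \<bar>int u - int v\<bar> \<le> int (d * R)}"
      by (meson mem_Collect_eq of_nat_le_iff order_trans)
  qed
qed

lemma local_algorithm_output_eq:
  assumes "local_algorithm alg r"
    and "valid_instance V E T1 T2" "valid_instance V E' T1' T2'" "v \<in> V"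
    and "ball E (r (card V)) v \<subseteq> S"
    and "\<And>u w. u \<in> S \<Longrightarrow> ({u, w} \<in> E \<longleftrightarrow> {u, w} \<in> E') \<and> ({u, w} \<in> T1 \<longleftrightarrow> {u, w} \<in> T1')
                           \<and> ({u, w} \<in> T2 \<longleftrightarrow> {u, w} \<in> T2')"
  shows "alg V E T1 T2 v = alg V E' T1' T2' v"
proof -
  let ?B = "ball E (r (card V)) v"
  have "\<forall>e \<in> E \<union> E'. card e = 2" "T1 \<union> T1' \<subseteq> E \<union> E'" "T2 \<union> T2' \<subseteq> E \<union> E'"
    using assms(2,3) unfolding valid_instance_def is_graph_def spanning_tree_def by auto
  then have "\<forall>e \<in> T1 \<union> T1'. card e = 2" "\<forall>e \<in> T2 \<union> T2'. card e = 2" by blast+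
  note incident_eq = this[THEN incident_eqI] \<open>\<forall>e \<in> E \<union> E'. card e = 2\<close>[THEN incident_eqI]
  have "?B = ball E' (r (card V)) v"
    by (rule ball_eq_if_adj_eq[OF assms(5)]) (use assms(6) in \<open>auto simp: adj_def fun_eq_iff\<close>)
  moreover have "touching ?B E = touching ?B E'" "touching ?B T1 = touching ?B T1'"
    "touching ?B T2 = touching ?B T2'"
    using assms(5,6) by (intro touching_eq_if_incident_eq incident_eq; blast)+
  ultimately show ?thesis
    using assms(1)[unfolded local_algorithm_def, rule_format, of V E T1 T2 V E' T1' T2' v]
      assms(2-4)
    by blast
qed

lemma valid_schedule_added_edge_unique:
  assumes "valid_schedule 1 V E T1 T2 out" "finite E" "v \<in> V"
    and "e \<in> fst (out v)" "e' \<in> fst (out v)"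
  shows "e = e'"
proof -
  have "fst (out v) \<subseteq> E" "card (fst (out v)) \<le> 1"
    using assms(1,3) unfolding valid_schedule_def incident_def by auto
  then show ?thesis
    using assms(2,4,5) card_le_Suc0_iff_eq finite_subset by (metis One_nat_def)
qed

lemma valid_schedule_new_edge_added:
  assumes "valid_schedule k V E T1 T2 out" "e \<in> T2 - T1"
  obtains v where "v \<in> V" "v \<in> e" "e \<in> fst (out v)"
proof -
  have "e \<in> (\<Union>v\<in>V. fst (out v))"
    using assms unfolding valid_schedule_def by blast
  then obtain v where "v \<in> V" "e \<in> fst (out v)" by blast
  moreover have "fst (out v) \<subseteq> incident v E"
    using assms(1) \<open>v \<in> V\<close> unfolding valid_schedule_def by blast
  ultimately show ?thesis using that unfolding incident_def by blast
qed

lemma valid_schedule_adders_unique: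
  assumes "valid_schedule k V E T1 T2 out" "u \<in> V" "w \<in> V"
    and "e \<in> fst (out u)" "e \<in> fst (out w)"
  shows "u = w"
  using assms unfolding valid_schedule_def by blast

section \<open>The path and the folded path\<close>

definition path_edges :: "(nat \<Rightarrow> nat) \<Rightarrow> nat \<Rightarrow> nat set set" where
  "path_edges p n = {{p a, p (Suc a)} | a. Suc a < n}"

definition skip_edges :: "(nat \<Rightarrow> nat) \<Rightarrow> nat \<Rightarrow> nat set set" where
  "skip_edges p n = {{p a, p (a + 2)} | a. a + 2 < n}"

definition folded_path :: "(nat \<Rightarrow> nat) \<Rightarrow> nat \<Rightarrow> nat set set" where
  "folded_path p n = insert {p 0, p 1} (skip_edges p n)"

definition path_square :: "(nat \<Rightarrow> nat) \<Rightarrow> nat \<Rightarrow> nat set set" where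
  "path_square p n = path_edges p n \<union> skip_edges p n"

lemma finite_path_square: "finite (path_square p n)"
proof -
  have "finite {a. Suc a < n}" "finite {a. a + 2 < n}"
    by (rule finite_subset[of _ "{..<n}"]; auto)+
  then show ?thesis
    unfolding path_square_def path_edges_def skip_edges_def by (auto intro: finite_image_set)
qed

lemma rtranclp_path_edges:
  assumes "inj_on p {..<n}" "a < n"
  shows "(adj (path_edges p n))\<^sup>*\<^sup>* (p 0) (p a)"
  using assms(2)
proof (induction a)
  case (Suc a)
  have "p a \<noteq> p (Suc a)" using assms(1) Suc.prems by (auto dest: inj_onD)
  then have "adj (path_edges p n) (p a) (p (Suc a))"
    using Suc.prems by (auto simp: adj_def path_edges_def)
  with Suc show ?case by (meson Suc_lessD rtranclp.rtrancl_into_rtrancl)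
qed simp

lemma rtranclp_folded_path:
  assumes "inj_on p {..<n}" "a < n"
  shows "(adj (folded_path p n))\<^sup>*\<^sup>* (p 0) (p a)"
  using assms(2)
proof (induction a rule: less_induct)
  case (less a)
  consider "a = 0" | "a = 1" | b where "a = b + 2"
    by (metis One_nat_def add_2_eq_Suc' not0_implies_Suc)
  then show ?case
  proof cases
    case 2
    then have "adj (folded_path p n) (p 0) (p a)"
      using assms(1) less.prems by (auto simp: adj_def folded_path_def dest: inj_onD)
    then show ?thesis by blast
  next
    case (3 b)
    then have "adj (folded_path p n) (p b) (p a)"
      using assms(1) less.prems by (auto simp: adj_def folded_path_def skip_edges_def dest: inj_onD)
    moreover have "(adj (folded_path p n))\<^sup>*\<^sup>* (p 0) (p b)" using less 3 by simp
    ultimately show ?thesis by (meson rtranclp.rtrancl_into_rtrancl)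
  qed simp
qed

lemma acyclic_path_edges:
  assumes "inj_on p {..<n}"
  shows "acyclic_edges (path_edges p n)"
proof (rule acyclic_edgesI)
  fix u v assume "{u, v} \<in> path_edges p n"
  then obtain a where a: "Suc a < n" "{u, v} = {p a, p (Suc a)}" by (auto simp: path_edges_def)
  define S where "S = p ` {..a}"
  have "{..a} \<subseteq> {..<n}" using a(1) by auto
  then have mem_S: "p c \<in> S \<longleftrightarrow> c \<le> a" if "c < n" for c
    unfolding S_def using inj_on_image_mem_iff[OF assms, of c "{..a}"] that by auto
  have "x \<in> S \<longleftrightarrow> y \<in> S" if "adj (path_edges p n - {{u, v}}) x y" for x y
  proof -
    obtain b where "Suc b < n" "{x, y} = {p b, p (Suc b)}" "b \<noteq> a"
      using \<open>adj _ x y\<close> a(2) by (auto simp: adj_def path_edges_def)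
    then show ?thesis using mem_S by (auto simp: doubleton_eq_iff)
  qed
  moreover have "p a \<in> S" "p (Suc a) \<notin> S" using mem_S a(1) by auto
  then have "u \<in> S \<longleftrightarrow> v \<notin> S" using a(2) by (auto simp: doubleton_eq_iff)
  ultimately show "\<exists>S. (u \<in> S \<longleftrightarrow> v \<notin> S)
      \<and> (\<forall>x y. adj (path_edges p n - {{u, v}}) x y \<longrightarrow> x \<in> S \<longleftrightarrow> y \<in> S)"
    by blast
qed

lemma acyclic_folded_path:
  assumes "inj_on p {..<n}" "2 \<le> n"
  shows "acyclic_edges (folded_path p n)"
proof (rule acyclic_edgesI)
  fix u v assume uv: "{u, v} \<in> folded_path p n"
  have mem_image: "p c \<in> p ` {c \<in> {..<n}. P c} \<longleftrightarrow> P c" if "c < n" for c P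
    using inj_on_image_mem_iff[OF assms(1), of c "{c \<in> {..<n}. P c}"] that by auto
  show "\<exists>S. (u \<in> S \<longleftrightarrow> v \<notin> S)
      \<and> (\<forall>x y. adj (folded_path p n - {{u, v}}) x y \<longrightarrow> x \<in> S \<longleftrightarrow> y \<in> S)"
  proof (cases "{u, v} = {p 0, p 1}")
    case True
    define S where "S = p ` {c \<in> {..<n}. even c}"
    have "x \<in> S \<longleftrightarrow> y \<in> S" if xy: "adj (folded_path p n - {{u, v}}) x y" for x y
    proof -
      have "{x, y} \<in> skip_edges p n"
        using xy True by (auto simp: adj_def folded_path_def)
      then obtain b where "b + 2 < n" "{x, y} = {p b, p (b + 2)}"
        by (auto simp: skip_edges_def)
      then show ?thesis using mem_image[of b even] mem_image[of "b + 2" even] unfolding S_def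
        by (auto simp: doubleton_eq_iff)
    qed
    moreover have "p 0 \<in> S" "p 1 \<notin> S" using mem_image assms(2) unfolding S_def by auto
    then have "u \<in> S \<longleftrightarrow> v \<notin> S" using True by (auto simp: doubleton_eq_iff)
    ultimately show ?thesis by blast
  next
    case False
    then obtain a where a: "a + 2 < n" "{u, v} = {p a, p (a + 2)}"
      using uv by (auto simp: folded_path_def skip_edges_def)
    define P where "P c \<longleftrightarrow> a + 2 \<le> c \<and> even (c + a)" for c
    define S where "S = p ` {c \<in> {..<n}. P c}"
    have "x \<in> S \<longleftrightarrow> y \<in> S" if xy: "adj (folded_path p n - {{u, v}}) x y" for x y
    proof (cases "{x, y} = {p 0, p 1}")
      case True
      have "p 0 \<notin> S" "p 1 \<notin> S" using mem_image assms(2) unfolding S_def P_def by auto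
      then show ?thesis using True by (auto simp: doubleton_eq_iff)
    next
      case False
      then obtain b where "b + 2 < n" "{x, y} = {p b, p (b + 2)}" "b \<noteq> a"
        using xy a(2) by (auto simp: adj_def folded_path_def skip_edges_def)
      moreover have "P b \<longleftrightarrow> P (b + 2)" using \<open>b \<noteq> a\<close> unfolding P_def by presburger
      ultimately show ?thesis using mem_image[of b P] mem_image[of "b + 2" P] unfolding S_def
        by (auto simp: doubleton_eq_iff)
    qed
    moreover have "p a \<notin> S" "p (a + 2) \<in> S" using mem_image a(1) unfolding S_def P_def by auto
    then have "u \<in> S \<longleftrightarrow> v \<notin> S" using a(2) by (auto simp: doubleton_eq_iff)
    ultimately show ?thesis by blast
  qed
qed

lemma valid_instance_path_square:
  assumes "bij_betw p {..<n} {..<n}" "2 \<le> n"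
  shows "valid_instance {..<n} (path_square p n) (folded_path p n) (path_edges p n)"
proof -
  have inj: "inj_on p {..<n}" using assms(1) bij_betw_imp_inj_on by blast
  have onto: "\<exists>a<n. u = p a" if "u < n" for u
    using assms(1) that by (metis bij_betw_imp_surj_on imageE lessThan_iff)
  have "{p a, p b} \<subseteq> {..<n} \<and> card {p a, p b} = 2" if "a < n" "b < n" "a \<noteq> b" for a b
  proof -
    have "p a \<noteq> p b" using inj that by (auto dest: inj_onD)
    moreover have "p a < n" "p b < n" using assms(1) that by (auto dest: bij_betwE)
    ultimately show ?thesis by auto
  qed
  then have graph: "is_graph {..<n} (path_square p n)"
    unfolding is_graph_def path_square_def path_edges_def skip_edges_def by auto
  have "{p 0, p 1} \<in> path_edges p n"
    using assms(2) by (auto simp: path_edges_def intro!: exI[of _ 0])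
  then have sub: "path_edges p n \<subseteq> path_square p n" "folded_path p n \<subseteq> path_square p n"
    unfolding path_square_def folded_path_def by auto
  have conn: "connected_on {..<n} (path_edges p n)" "connected_on {..<n} (folded_path p n)"
    using onto rtranclp_path_edges[OF inj] rtranclp_folded_path[OF inj]
    by (auto intro!: connected_onI[of _ _ "p 0"])
  then have "connected_on {..<n} (path_square p n)"
    using rtranclp_adj_mono[OF _ sub(1)] unfolding connected_on_def by blast
  with graph sub conn show ?thesis
    unfolding valid_instance_def spanning_tree_def
    using acyclic_path_edges[OF inj] acyclic_folded_path[OF inj assms(2)] by blast
qed

lemma doubleton_eq_involution_iff:
  assumes "\<And>a. p (p a) = a"
  shows "{u, w} = {p a, p b} \<longleftrightarrow> {p u, p w} = {a, b}"
  using assms by (metis doubleton_eq_iff)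

lemma doubleton_shift_iff:
  "(\<exists>a. a + d < n \<and> {x, y} = {a, a + d}) \<longleftrightarrow> x < n \<and> y < n \<and> \<bar>int x - int y\<bar> = int d"
proof
  assume "x < n \<and> y < n \<and> \<bar>int x - int y\<bar> = int d"
  then show "\<exists>a. a + d < n \<and> {x, y} = {a, a + d}"
    by (intro exI[of _ "min x y"]) (auto simp: abs_if split: if_splits)
qed (auto simp: doubleton_eq_iff)

lemma path_edges_involution_iff:
  assumes "\<And>a. p (p a) = a"
  shows "{u, w} \<in> path_edges p n \<longleftrightarrow> p u < n \<and> p w < n \<and> \<bar>int (p u) - int (p w)\<bar> = 1"
proof -
  have "{u, w} \<in> path_edges p n \<longleftrightarrow> (\<exists>a. a + 1 < n \<and> {p u, p w} = {a, a + 1})"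
    unfolding path_edges_def using doubleton_eq_involution_iff[OF assms] by auto
  then show ?thesis unfolding doubleton_shift_iff by simp
qed

lemma skip_edges_involution_iff:
  assumes "\<And>a. p (p a) = a"
  shows "{u, w} \<in> skip_edges p n \<longleftrightarrow> p u < n \<and> p w < n \<and> \<bar>int (p u) - int (p w)\<bar> = 2"
proof -
  have "{u, w} \<in> skip_edges p n \<longleftrightarrow> (\<exists>a. a + 2 < n \<and> {p u, p w} = {a, a + 2})"
    unfolding skip_edges_def using doubleton_eq_involution_iff[OF assms] by auto
  then show ?thesis unfolding doubleton_shift_iff by simp
qed

section \<open>Schedules from the folded path to the path\<close>

lemma path_edge_added_by_endpoint:
  assumes "bij_betw p {..<n} {..<n}"
    and sched: "valid_schedule 1 {..<n} (path_square p n) (folded_path p n) (path_edges p n) out"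
    and "1 \<le> k" "Suc k < n"
  shows "{p k, p (Suc k)} \<in> fst (out (p k)) \<or> {p k, p (Suc k)} \<in> fst (out (p (Suc k)))"
proof -
  have inj: "inj_on p {..<n}" using assms(1) bij_betw_imp_inj_on by blast
  have "{p k, p (Suc k)} \<in> path_edges p n" using assms(4) by (auto simp: path_edges_def)
  moreover have "{p k, p (Suc k)} \<noteq> {p a, p (a + 2)}" if "a + 2 < n" for a
    using that assms(4) by (auto simp: doubleton_eq_iff inj_on_eq_iff[OF inj])
  moreover have "{p k, p (Suc k)} \<noteq> {p 0, p 1}"
    using assms(3,4) by (auto simp: doubleton_eq_iff inj_on_eq_iff[OF inj])
  ultimately have "{p k, p (Suc k)} \<in> path_edges p n - folded_path p n"
    by (auto simp: folded_path_def skip_edges_def)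
  with sched obtain v where "v \<in> {p k, p (Suc k)}" "{p k, p (Suc k)} \<in> fst (out v)"
    by (rule valid_schedule_new_edge_added)
  then show ?thesis by auto
qed

lemma path_edge_added_by_right_end:
  assumes "bij_betw p {..<n} {..<n}"
    and sched: "valid_schedule 1 {..<n} (path_square p n) (folded_path p n) (path_edges p n) out"
    and "1 \<le> i" "i \<le> j" "Suc j < n"
    and "{p i, p (Suc i)} \<in> fst (out (p (Suc i)))"
  shows "{p j, p (Suc j)} \<in> fst (out (p (Suc j)))"
  using assms(4-6)
proof (induction j rule: dec_induct)
  case (step k)
  have added_k: "{p k, p (Suc k)} \<in> fst (out (p (Suc k)))" using step by simp
  have inj: "inj_on p {..<n}" using assms(1) bij_betw_imp_inj_on by blast
  have "p (Suc k) \<in> {..<n}" using assms(1) step.prems by (auto dest: bij_betwE)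
  moreover have "{p k, p (Suc k)} \<noteq> {p (Suc k), p (Suc (Suc k))}"
    using step.prems by (auto simp: doubleton_eq_iff inj_on_eq_iff[OF inj])
  ultimately have "{p (Suc k), p (Suc (Suc k))} \<notin> fst (out (p (Suc k)))"
    using valid_schedule_added_edge_unique[OF sched finite_path_square _ added_k] by blast
  then show ?case
    using path_edge_added_by_endpoint[OF assms(1) sched, of "Suc k"] step.prems by auto
qed simp

lemma no_inward_path_edge_adders:
  assumes "bij_betw p {..<n} {..<n}"
    and sched: "valid_schedule 1 {..<n} (path_square p n) (folded_path p n) (path_edges p n) out"
    and "1 \<le> i" "i \<le> j" "Suc j < n"
    and "{p i, p (Suc i)} \<in> fst (out (p (Suc i)))"
    and "{p j, p (Suc j)} \<in> fst (out (p j))"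
  shows False
proof -
  have "{p j, p (Suc j)} \<in> fst (out (p (Suc j)))"
    using path_edge_added_by_right_end[OF assms(1-6)] .
  moreover have "p j \<noteq> p (Suc j)" "p j \<in> {..<n}" "p (Suc j) \<in> {..<n}"
    using assms(1,5) by (auto simp: bij_betw_def inj_on_eq_iff)
  ultimately show False
    using valid_schedule_adders_unique[OF sched] assms(7) by blast
qed

section \<open>Reversing blocks\<close>

definition reverse_blocks :: "nat \<Rightarrow> bool \<Rightarrow> bool \<Rightarrow> nat \<Rightarrow> nat" where
  "reverse_blocks h s t a =
     (if a < h \<and> s then h - 1 - a else if h \<le> a \<and> a < 2 * h \<and> t then 3 * h - 1 - a else a)"

text \<open>Far enough from the block ends that the neighbours \<open>u \<plusminus> 1\<close>, \<open>u \<plusminus> 2\<close> lie in the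
  same block and \<open>u\<close> is not an endpoint of the fold edge \<open>{p 0, p 1}\<close>.\<close>

definition block_interior :: "nat \<Rightarrow> nat \<Rightarrow> bool" where
  "block_interior h u \<longleftrightarrow> (2 \<le> u \<and> u + 3 \<le> h) \<or> (h + 2 \<le> u \<and> u + 3 \<le> 2 * h)"

lemma bij_reverse_blocks: "2 * h \<le> n \<Longrightarrow> bij_betw (reverse_blocks h s t) {..<n} {..<n}"
  by (rule bij_betw_byWitness[where f' = "reverse_blocks h s t"]) (auto simp: reverse_blocks_def)

lemma reverse_blocks_involution: "reverse_blocks h s t (reverse_blocks h s t a) = a"
  by (auto simp: reverse_blocks_def)

lemma reverse_blocks_dist:
  assumes "block_interior h u"
    and "\<bar>int w - int u\<bar> \<le> 2 \<or> \<bar>int (reverse_blocks h s t w) - int (reverse_blocks h s t u)\<bar> \<le> 2"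
  shows "\<bar>int (reverse_blocks h s t w) - int (reverse_blocks h s t u)\<bar> = \<bar>int w - int u\<bar>"
  using assms unfolding block_interior_def reverse_blocks_def by (auto split: if_splits)

lemma reverse_blocks_less: "a < 2 * h \<Longrightarrow> reverse_blocks h s t a < 2 * h"
  by (auto simp: reverse_blocks_def)

lemma reverse_blocks_interior_less:
  assumes "2 * h \<le> n" "block_interior h u" "\<bar>int w - int u\<bar> \<le> 2"
  shows "reverse_blocks h s t u < n" "reverse_blocks h s t w < n"
proof -
  have "u < 2 * h" "w < 2 * h" using assms(2,3) unfolding block_interior_def by auto
  then show "reverse_blocks h s t u < n" "reverse_blocks h s t w < n"
    using reverse_blocks_less assms(1) by (meson less_le_trans)+
qed

lemma path_edges_reverse_blocks_iff:
  assumes "2 * h \<le> n" "block_interior h u"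
  shows "{u, w} \<in> path_edges (reverse_blocks h s t) n \<longleftrightarrow> \<bar>int w - int u\<bar> = 1"
  unfolding path_edges_involution_iff[OF reverse_blocks_involution]
  using reverse_blocks_dist[OF assms(2), of w s t] reverse_blocks_interior_less[OF assms, of w s t]
  by (auto simp: abs_minus_commute)

lemma skip_edges_reverse_blocks_iff:
  assumes "2 * h \<le> n" "block_interior h u"
  shows "{u, w} \<in> skip_edges (reverse_blocks h s t) n \<longleftrightarrow> \<bar>int w - int u\<bar> = 2"
  unfolding skip_edges_involution_iff[OF reverse_blocks_involution]
  using reverse_blocks_dist[OF assms(2), of w s t] reverse_blocks_interior_less[OF assms, of w s t]
  by (auto simp: abs_minus_commute)

lemma folded_path_reverse_blocks_iff:
  assumes "2 * h \<le> n" "block_interior h u"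
  shows "{u, w} \<in> folded_path (reverse_blocks h s t) n \<longleftrightarrow> \<bar>int w - int u\<bar> = 2"
proof -
  have "u \<notin> {reverse_blocks h s t 0, reverse_blocks h s t 1}"
    using assms(2) unfolding block_interior_def reverse_blocks_def by auto
  then show ?thesis
    using skip_edges_reverse_blocks_iff[OF assms] unfolding folded_path_def by auto
qed

lemma path_square_reverse_blocks_iff:
  assumes "2 * h \<le> n" "block_interior h u"
  shows "{u, w} \<in> path_square (reverse_blocks h s t) n \<longleftrightarrow> \<bar>int w - int u\<bar> \<in> {1, 2}"
  using path_edges_reverse_blocks_iff[OF assms] skip_edges_reverse_blocks_iff[OF assms]
  unfolding path_square_def by auto

abbreviation run_on_path_square where
  "run_on_path_square alg p n \<equiv> alg {..<n} (path_square p n) (folded_path p n) (path_edges p n)"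

lemma reverse_blocks_output_eq:
  assumes "local_algorithm alg r" "2 * h \<le> n"
    and interior: "\<And>x. \<bar>int x - int v\<bar> \<le> int (2 * r n) \<Longrightarrow> block_interior h x"
  shows "run_on_path_square alg (reverse_blocks h s t) n v
    = run_on_path_square alg (reverse_blocks h s' t') n v"
proof (rule local_algorithm_output_eq[OF assms(1)])
  let ?p = "reverse_blocks h s t" and ?q = "reverse_blocks h s' t'"
  let ?S = "{x. \<bar>int x - int v\<bar> \<le> int (2 * r n)}"
  have "block_interior h v" using interior by simp
  then have "v < n" "2 \<le> n" using assms(2) unfolding block_interior_def by auto
  then show "v \<in> {..<n}"
    "valid_instance {..<n} (path_square ?p n) (folded_path ?p n) (path_edges ?p n)"
    "valid_instance {..<n} (path_square ?q n) (folded_path ?q n) (path_edges ?q n)"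
    using assms(2) by (auto intro!: valid_instance_path_square bij_reverse_blocks)
  show "ball (path_square ?p n) (r (card {..<n})) v \<subseteq> ?S"
  proof (unfold card_lessThan, rule ball_subset_window)
    fix w x assume "\<bar>int w - int v\<bar> \<le> int (2 * r n)" "adj (path_square ?p n) w x"
    then show "\<bar>int x - int w\<bar> \<le> int 2"
      using interior path_square_reverse_blocks_iff[OF assms(2)] by (auto simp: adj_def)
  qed
  show "({u, w} \<in> path_square ?p n \<longleftrightarrow> {u, w} \<in> path_square ?q n)
    \<and> ({u, w} \<in> folded_path ?p n \<longleftrightarrow> {u, w} \<in> folded_path ?q n)
    \<and> ({u, w} \<in> path_edges ?p n \<longleftrightarrow> {u, w} \<in> path_edges ?q n)"
    if "u \<in> ?S" for u w
    using that interior path_square_reverse_blocks_iff[OF assms(2)]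
      folded_path_reverse_blocks_iff[OF assms(2)] path_edges_reverse_blocks_iff[OF assms(2)]
    by simp
qed

lemma reverse_blocks_middle:
  assumes "h = 2 * m + 2"
  shows "reverse_blocks h s t m = (if s then Suc m else m)"
    "reverse_blocks h s t (Suc m) = (if s then m else Suc m)"
    "reverse_blocks h s t (h + m) = (if t then Suc (h + m) else h + m)"
    "reverse_blocks h s t (Suc (h + m)) = (if t then h + m else Suc (h + m))"
  using assms by (auto simp: reverse_blocks_def)

lemma radius_lower_bound:
  assumes local: "local_algorithm alg r"
    and correct: "\<And>V E T1 T2. valid_instance V E T1 T2 \<Longrightarrow> valid_schedule 1 V E T1 T2 (alg V E T1 T2)"
  shows "n < 8 * r n + 12"
proof (rule ccontr)
  assume "\<not> n < 8 * r n + 12"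
  define m where "m = n div 4 - 1"
  define h where "h = 2 * m + 2"
  have hn: "2 * h \<le> n" and rm: "2 * r n + 2 \<le> m" and "2 \<le> n"
    using \<open>\<not> n < 8 * r n + 12\<close> unfolding h_def m_def by presburger+
  note middle = reverse_blocks_middle[OF h_def]
  have sched: "valid_schedule 1 {..<n} (path_square (reverse_blocks h s t) n)
      (folded_path (reverse_blocks h s t) n) (path_edges (reverse_blocks h s t) n)
      (run_on_path_square alg (reverse_blocks h s t) n)" for s t
    by (rule correct[OF valid_instance_path_square[OF bij_reverse_blocks[OF hn] \<open>2 \<le> n\<close>]])
  let ?out_id = "run_on_path_square alg (reverse_blocks h False False) n"
  have added_id: "{m, Suc m} \<in> fst (?out_id m) \<or> {m, Suc m} \<in> fst (?out_id (Suc m))"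
    "{h + m, Suc (h + m)} \<in> fst (?out_id (h + m))
      \<or> {h + m, Suc (h + m)} \<in> fst (?out_id (Suc (h + m)))"
    using path_edge_added_by_endpoint[OF bij_reverse_blocks[OF hn] sched[of False False], of m]
      path_edge_added_by_endpoint[OF bij_reverse_blocks[OF hn] sched[of False False], of "h + m"]
      hn rm middle
    unfolding h_def by auto
  txt \<open>Reverse a block exactly when the unreversed run adds its middle edge at the wrong end.\<close>
  obtain s where s: "s \<longleftrightarrow> {m, Suc m} \<in> fst (?out_id m)" by blast
  obtain t where t: "t \<longleftrightarrow> {h + m, Suc (h + m)} \<in> fst (?out_id (Suc (h + m)))" by blast
  let ?p = "reverse_blocks h s t"
  let ?out = "run_on_path_square alg ?p n"
  have "?out v = ?out_id v" if "v \<in> {m, Suc m, h + m, Suc (h + m)}" for v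
  proof (rule reverse_blocks_output_eq[OF local hn])
    show "block_interior h x" if "\<bar>int x - int v\<bar> \<le> int (2 * r n)" for x
      using \<open>v \<in> _\<close> that rm unfolding h_def block_interior_def by (auto simp: abs_le_iff)
  qed
  then have "{?p m, ?p (Suc m)} \<in> fst (?out (?p (Suc m)))"
    "{?p (h + m), ?p (Suc (h + m))} \<in> fst (?out (?p (h + m)))"
    using s t added_id by (auto simp: middle insert_commute)
  then show False
    using no_inward_path_edge_adders[OF bij_reverse_blocks[OF hn] sched, of m "h + m"] hn rm
    unfolding h_def by auto
qed

theorem mainTheorem1:
  fixes alg :: "nat set \<Rightarrow> nat set set \<Rightarrow> nat set set \<Rightarrow> nat set set \<Rightarrow> nat \<Rightarrow> nat set set \<times> nat set set"
    and r :: "nat \<Rightarrow> nat"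
  assumes "local_algorithm alg r"
    and "\<And>V E T1 T2. valid_instance V E T1 T2 \<Longrightarrow> valid_schedule 1 V E T1 T2 (alg V E T1 T2)"
  shows "(\<lambda>n. real (r n)) \<in> \<Omega>(\<lambda>n. real n)"
proof (rule landau_omega.bigI)
  have "real n \<le> 16 * real (r n)" if "24 \<le> n" for n
    using radius_lower_bound[OF assms, of n] that by linarith
  then show "eventually (\<lambda>n. norm (real (r n)) \<ge> 1 / 16 * norm (real n)) at_top"
    unfolding eventually_at_top_linorder by (auto simp: mult.commute)
qed simp

end
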